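(* Let $\Lambda_1,\Lambda_2,\Lambda_3,\Lambda_4\subset\mathbb{R}^3$ be the lattices spanned over $\mathbb{Z}$ by the rows of, respectively, $$\begin{bmatrix}2&1&1\\1&2&-1\\-2&2&2\end{bmatrix},\ \begin{bmatrix}1&2&1\\-1&1&2\\2&-2&2\end{bmatrix},\ \begin{bmatrix}1&1&2\\2&-1&1\\2&2&-2\end{bmatrix},\ \begin{bmatrix}2&-1&-1\\-1&2&-1\\2&2&2\end{bmatrix}.$$ Each $\Lambda_i$ is congruent to $\sqrt3A_2\oplus\sqrt{12}\,\mathbb{Z}$, and $\Lambda_1\cap\Lambda_2\cap\Lambda_3\cap\Lambda_4$ is the face-centered cubic lattice spanned by $(3,3,0)$, $(3,-3,0)$, $(0,3,-3)$.
   Context: A lattice is spanned by the rows of a matrix if it is the set of all integer linear combinations of those rows. $A_2$ denotes the planar hexagonal lattice with minimal norm $2$ (norm = squared length), so that $\sqrt3A_2\oplus\sqrt{12}\,\mathbb{Z}$ has Gram matrix $\begin{bmatrix}6&-3&0\\-3&6&0\\0&0&12\end{bmatrix}$. Two lattices are congruent if one is mapped to the other by an element of $SO(3)$. *)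

theory Defs
  imports "HOL-Analysis.Analysis"
begin

definition lattice_rows :: "real^3^3 \<Rightarrow> (real^3) set" where
  "lattice_rows M = {(\<Sum>i\<in>UNIV. of_int (c i) *\<^sub>R row i M) | c :: 3 \<Rightarrow> int. True}"

text \<open>A concrete model of sqrt3 A2 (+) sqrt12 Z in R^3: rows of this matrix have
  Gram matrix [[6,-3,0],[-3,6,0],[0,0,12]].\<close>
definition L0_basis :: "real^3^3" where
  "L0_basis = vector [vector [sqrt 6, 0, 0],
                      vector [- sqrt 6 / 2, 3 / sqrt 2, 0],
                      vector [0, 0, sqrt 12]]"

definition L0 :: "(real^3) set" where
  "L0 = lattice_rows L0_basis"

definition congruent3 :: "(real^3) set \<Rightarrow> (real^3) set \<Rightarrow> bool" where
  "congruent3 A B \<longleftrightarrow> (\<exists>R :: real^3^3. orthogonal_matrix R \<and> det R = 1 \<and> (\<lambda>x. R *v x) ` A = B)"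

end

theory Submission
  imports Defs
begin

text \<open>Each \<open>\<Lambda>\<^sub>i\<close> has a basis \<open>r\<^sub>1, r\<^sub>2, r\<^sub>3\<close> with \<open>|r\<^sub>1|\<^sup>2 = |r\<^sub>2|\<^sup>2 = 6\<close>,
  \<open>r\<^sub>1 \<bullet> r\<^sub>2 = \<plusminus>3\<close> and \<open>r\<^sub>3\<close> orthogonal to both with \<open>|r\<^sub>3|\<^sup>2 = 12\<close>. After negating \<open>r\<^sub>2\<close> and \<open>r\<^sub>3\<close>
  if necessary (which does not change the lattice) its Gram matrix is that of \<open>L0_basis\<close>, so the
  rotation with rows \<open>r\<^sub>1/|r\<^sub>1|\<close>, the unit vector in the plane of \<open>r\<^sub>1, r\<^sub>2\<close> orthogonal to
  \<open>r\<^sub>1\<close>, and \<open>\<plusminus>r\<^sub>3/|r\<^sub>3|\<close> maps this basis onto \<open>L0_basis\<close>.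

  The fcc basis is an integral combination of each of the four bases, so the fcc lattice lies in
  every \<open>\<Lambda>\<^sub>i\<close>. Conversely already \<open>\<Lambda>\<^sub>1 \<inter> \<Lambda>\<^sub>4\<close> lies in it: the fcc coordinates of a common
  point are integral combinations of its coordinates with respect to the bases of \<open>\<Lambda>\<^sub>1\<close> and \<open>\<Lambda>\<^sub>4\<close>.\<close>

lemma lattice_rows_altdef: "lattice_rows M = {c v* M | c. \<forall>i. c $ i \<in> \<int>}"
proof -
  have combination: "(\<Sum>i\<in>UNIV. of_int (f i) *\<^sub>R row i M) = (\<chi> i. of_int (f i)) v* M"
    for f :: "3 \<Rightarrow> int"
    by (simp add: vec_eq_iff vector_matrix_mult_def row_def sum_component mult.commute)
  have "x \<in> lattice_rows M \<longleftrightarrow> (\<exists>c. x = c v* M \<and> (\<forall>i. c $ i \<in> \<int>))" for x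
  proof
    assume "x \<in> lattice_rows M"
    then obtain f :: "3 \<Rightarrow> int" where "x = (\<chi> i. of_int (f i)) v* M"
      unfolding lattice_rows_def combination by blast
    then show "\<exists>c. x = c v* M \<and> (\<forall>i. c $ i \<in> \<int>)"
      by fastforce
  next
    assume "\<exists>c. x = c v* M \<and> (\<forall>i. c $ i \<in> \<int>)"
    then obtain c where x: "x = c v* M" and "\<forall>i. c $ i \<in> \<int>"
      by blast
    then have "\<forall>i. \<exists>n. c $ i = of_int n"
      by (auto simp: Ints_def)
    then obtain f :: "3 \<Rightarrow> int" where "c = (\<chi> i. of_int (f i))"
      unfolding choice_iff vec_eq_iff by auto
    then show "x \<in> lattice_rows M"
      unfolding lattice_rows_def combination x by blast
  qed
  then show ?thesis by blast
qed

lemma lattice_rows_vector3: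
  "lattice_rows (vector [u, v, w]) =
     {of_int a *\<^sub>R u + of_int b *\<^sub>R v + of_int c *\<^sub>R w | a b c :: int. True}"
proof -
  have rows: "row 1 (vector [u, v, w] :: real^3^3) = u" "row 2 (vector [u, v, w] :: real^3^3) = v"
    "row 3 (vector [u, v, w] :: real^3^3) = w"
    by (simp_all add: row_def vec_lambda_eta)
  have ex3: "(\<exists>f :: 3 \<Rightarrow> int. P (f 1) (f 2) (f 3)) \<longleftrightarrow> (\<exists>a b c. P a b c)" for P
  proof
    show "\<exists>a b c. P a b c" if "\<exists>f :: 3 \<Rightarrow> int. P (f 1) (f 2) (f 3)"
      using that by blast
  next
    assume "\<exists>a b c. P a b c"
    then obtain a b c where "P a b c" by blast
    then have "P ((vector [a, b, c] :: int^3) $ 1) ((vector [a, b, c] :: int^3) $ 2)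
        ((vector [a, b, c] :: int^3) $ 3)"
      by simp
    then show "\<exists>f :: 3 \<Rightarrow> int. P (f 1) (f 2) (f 3)" by blast
  qed
  show ?thesis
    unfolding lattice_rows_def sum_3 rows
    using ex3[where P = "\<lambda>a b c. _ = of_int a *\<^sub>R u + of_int b *\<^sub>R v + of_int c *\<^sub>R w"]
    by auto
qed

lemma image_lattice_rows: "(\<lambda>x. R *v x) ` lattice_rows M = lattice_rows (M ** transpose R)"
proof -
  have composition: "(\<lambda>c. R *v (c v* M)) = (\<lambda>c. c v* (M ** transpose R))"
    by (simp flip: vector_matrix_mul_assoc)
  show ?thesis
    unfolding lattice_rows_altdef setcompr_eq_image image_image by (simp only: composition)
qed

definition integer_matrix :: "real^'n^'m \<Rightarrow> bool" where
  "integer_matrix U \<longleftrightarrow> (\<forall>i j. U $ i $ j \<in> \<int>)"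

lemma lattice_rows_mult_subset:
  assumes "integer_matrix U"
  shows "lattice_rows (U ** M) \<subseteq> lattice_rows M"
proof -
  have "\<forall>j. (c v* U) $ j \<in> \<int>" if "\<forall>i. c $ i \<in> \<int>" for c
    using assms that unfolding integer_matrix_def vector_matrix_mult_def
    by (auto intro!: Ints_sum Ints_mult)
  then show ?thesis
    unfolding lattice_rows_altdef by (auto simp flip: vector_matrix_mul_assoc)
qed

lemma lattice_rows_mult_unimodular:
  assumes "integer_matrix U" "integer_matrix V" "V ** U = mat 1"
  shows "lattice_rows (U ** M) = lattice_rows M"
proof
  show "lattice_rows (U ** M) \<subseteq> lattice_rows M"
    using assms(1) by (rule lattice_rows_mult_subset)
  have "lattice_rows (V ** (U ** M)) \<subseteq> lattice_rows (U ** M)"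
    using assms(2) by (rule lattice_rows_mult_subset)
  then show "lattice_rows M \<subseteq> lattice_rows (U ** M)"
    by (simp add: matrix_mul_assoc assms(3))
qed

lemma congruent3_lattice_rowsI:
  assumes "rotation_matrix R" "M ** transpose R = B"
  shows "congruent3 (lattice_rows M) (lattice_rows B)"
  using assms unfolding congruent3_def rotation_matrix_def
  by (metis image_lattice_rows)

lemmas matrix3_simps = vec_eq_iff forall_3 sum_3 matrix_matrix_mult_def transpose_def mat_def

definition flip23 :: "real^3^3" where
  "flip23 = vector [vector [1, 0, 0], vector [0, -1, 0], vector [0, 0, -1]]"

lemma lattice_rows_flip23_L0_basis: "lattice_rows (flip23 ** L0_basis) = L0"
  unfolding L0_def
  by (rule lattice_rows_mult_unimodular[where V = flip23])
    (simp_all add: flip23_def integer_matrix_def matrix3_simps)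

lemma sqrt_6: "sqrt 6 = sqrt 2 * sqrt 3"
  by (simp flip: real_sqrt_mult)

lemma L0_basis_sqrt: "L0_basis = vector [vector [sqrt 2 * sqrt 3, 0, 0],
    vector [- (sqrt 2 * sqrt 3) / 2, 3 / 2 * sqrt 2, 0], vector [0, 0, 2 * sqrt 3]]"
proof -
  have sqrt_12: "sqrt 12 = 2 * sqrt 3"
    by (rule real_sqrt_unique) (simp_all add: power_mult_distrib)
  have three_div_sqrt_2: "3 / sqrt 2 = 3 / 2 * sqrt 2"
    by (simp add: field_simps)
  show ?thesis
    unfolding L0_basis_def sqrt_6 sqrt_12 three_div_sqrt_2 ..
qed

definition Lambda1_basis :: "real^3^3" where
  "Lambda1_basis = vector [vector [2, 1, 1], vector [1, 2, -1], vector [-2, 2, 2]]"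

definition Lambda2_basis :: "real^3^3" where
  "Lambda2_basis = vector [vector [1, 2, 1], vector [-1, 1, 2], vector [2, -2, 2]]"

definition Lambda3_basis :: "real^3^3" where
  "Lambda3_basis = vector [vector [1, 1, 2], vector [2, -1, 1], vector [2, 2, -2]]"

definition Lambda4_basis :: "real^3^3" where
  "Lambda4_basis = vector [vector [2, -1, -1], vector [-1, 2, -1], vector [2, 2, 2]]"

definition fcc_basis :: "real^3^3" where
  "fcc_basis = vector [vector [3, 3, 0], vector [3, -3, 0], vector [0, 3, -3]]"

lemma congruent3_Lambda1_L0: "congruent3 (lattice_rows Lambda1_basis) L0"
proof -
  define R :: "real^3^3" where
    "R = vector [(1 / sqrt 6) *\<^sub>R vector [2, 1, 1], (1 / sqrt 2) *\<^sub>R vector [0, -1, 1],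
      (1 / sqrt 3) *\<^sub>R vector [1, -1, -1]]"
  have "rotation_matrix R"
    unfolding rotation_matrix_def orthogonal_matrix R_def det_3 sqrt_6
    by (simp add: matrix3_simps field_simps)
  moreover have "Lambda1_basis ** transpose R = flip23 ** L0_basis"
    unfolding Lambda1_basis_def R_def L0_basis_sqrt flip23_def sqrt_6
    by (simp add: matrix3_simps field_simps)
  ultimately show ?thesis
    by (metis congruent3_lattice_rowsI lattice_rows_flip23_L0_basis)
qed

lemma congruent3_Lambda2_L0: "congruent3 (lattice_rows Lambda2_basis) L0"
proof -
  define R :: "real^3^3" where
    "R = vector [(1 / sqrt 6) *\<^sub>R vector [1, 2, 1], (1 / sqrt 2) *\<^sub>R vector [1, 0, -1],
      (1 / sqrt 3) *\<^sub>R vector [-1, 1, -1]]"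
  have "rotation_matrix R"
    unfolding rotation_matrix_def orthogonal_matrix R_def det_3 sqrt_6
    by (simp add: matrix3_simps field_simps)
  moreover have "Lambda2_basis ** transpose R = flip23 ** L0_basis"
    unfolding Lambda2_basis_def R_def L0_basis_sqrt flip23_def sqrt_6
    by (simp add: matrix3_simps field_simps)
  ultimately show ?thesis
    by (metis congruent3_lattice_rowsI lattice_rows_flip23_L0_basis)
qed

lemma congruent3_Lambda3_L0: "congruent3 (lattice_rows Lambda3_basis) L0"
proof -
  define R :: "real^3^3" where
    "R = vector [(1 / sqrt 6) *\<^sub>R vector [1, 1, 2], (1 / sqrt 2) *\<^sub>R vector [-1, 1, 0],
      (1 / sqrt 3) *\<^sub>R vector [-1, -1, 1]]"
  have "rotation_matrix R"
    unfolding rotation_matrix_def orthogonal_matrix R_def det_3 sqrt_6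
    by (simp add: matrix3_simps field_simps)
  moreover have "Lambda3_basis ** transpose R = flip23 ** L0_basis"
    unfolding Lambda3_basis_def R_def L0_basis_sqrt flip23_def sqrt_6
    by (simp add: matrix3_simps field_simps)
  ultimately show ?thesis
    by (metis congruent3_lattice_rowsI lattice_rows_flip23_L0_basis)
qed

lemma congruent3_Lambda4_L0: "congruent3 (lattice_rows Lambda4_basis) L0"
proof -
  define R :: "real^3^3" where
    "R = vector [(1 / sqrt 6) *\<^sub>R vector [2, -1, -1], (1 / sqrt 2) *\<^sub>R vector [0, 1, -1],
      (1 / sqrt 3) *\<^sub>R vector [1, 1, 1]]"
  have "rotation_matrix R"
    unfolding rotation_matrix_def orthogonal_matrix R_def det_3 sqrt_6
    by (simp add: matrix3_simps field_simps)
  moreover have "Lambda4_basis ** transpose R = L0_basis"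
    unfolding Lambda4_basis_def R_def L0_basis_sqrt sqrt_6
    by (simp add: matrix3_simps field_simps)
  ultimately show ?thesis
    unfolding L0_def by (rule congruent3_lattice_rowsI)
qed

lemma lattice_rows_subsetI:
  assumes "integer_matrix U" "U ** M = N"
  shows "lattice_rows N \<subseteq> lattice_rows M"
  using assms lattice_rows_mult_subset by blast

lemma fcc_subset_Lambda:
  shows "lattice_rows fcc_basis \<subseteq> lattice_rows Lambda1_basis"
    and "lattice_rows fcc_basis \<subseteq> lattice_rows Lambda2_basis"
    and "lattice_rows fcc_basis \<subseteq> lattice_rows Lambda3_basis"
    and "lattice_rows fcc_basis \<subseteq> lattice_rows Lambda4_basis"
proof -
  show "lattice_rows fcc_basis \<subseteq> lattice_rows Lambda1_basis"
    by (rule lattice_rows_subsetI[where U = "vector [vector [1, 1, 0], vector [1, -1, -1], vector [-1, 2, 0]]"])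
      (simp_all add: Lambda1_basis_def fcc_basis_def integer_matrix_def matrix3_simps)
  show "lattice_rows fcc_basis \<subseteq> lattice_rows Lambda2_basis"
    by (rule lattice_rows_subsetI[where U = "vector [vector [2, -1, 0], vector [0, -1, 1], vector [1, -1, -1]]"])
      (simp_all add: Lambda2_basis_def fcc_basis_def integer_matrix_def matrix3_simps)
  show "lattice_rows fcc_basis \<subseteq> lattice_rows Lambda3_basis"
    by (rule lattice_rows_subsetI[where U = "vector [vector [1, 0, 1], vector [-1, 2, 0], vector [0, -1, 1]]"])
      (simp_all add: Lambda3_basis_def fcc_basis_def integer_matrix_def matrix3_simps)
  show "lattice_rows fcc_basis \<subseteq> lattice_rows Lambda4_basis"
    by (rule lattice_rows_subsetI[where U = "vector [vector [1, 1, 1], vector [1, -1, 0], vector [1, 2, 0]]"])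
      (simp_all add: Lambda4_basis_def fcc_basis_def integer_matrix_def matrix3_simps)
qed

lemma Lambda1_inter_Lambda4_subset_fcc:
  "lattice_rows Lambda1_basis \<inter> lattice_rows Lambda4_basis \<subseteq> lattice_rows fcc_basis"
proof
  fix x
  assume "x \<in> lattice_rows Lambda1_basis \<inter> lattice_rows Lambda4_basis"
  then obtain a1 b1 c1 a4 b4 c4 :: int where
    x1: "x = of_int a1 *\<^sub>R vector [2, 1, 1] + of_int b1 *\<^sub>R vector [1, 2, -1]
      + of_int c1 *\<^sub>R vector [-2, 2, 2]"
    and x4: "x = of_int a4 *\<^sub>R vector [2, -1, -1] + of_int b4 *\<^sub>R vector [-1, 2, -1]
      + of_int c4 *\<^sub>R vector [2, 2, 2]"
    unfolding Lambda1_basis_def Lambda4_basis_def lattice_rows_vector3 by blast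
  have "x = of_int c4 *\<^sub>R vector [3, 3, 0] + of_int (- c1) *\<^sub>R vector [3, -3, 0]
      + of_int (c4 - a1 - c1) *\<^sub>R vector [0, 3, -3]"
    using x1 x4 unfolding vec_eq_iff forall_3 by simp
  then show "x \<in> lattice_rows fcc_basis"
    unfolding fcc_basis_def lattice_rows_vector3 by blast
qed

theorem mainTheorem4:
  defines "\<Lambda>1 \<equiv> lattice_rows (vector [vector [2,1,1], vector [1,2,-1], vector [-2,2,2]])"
      and "\<Lambda>2 \<equiv> lattice_rows (vector [vector [1,2,1], vector [-1,1,2], vector [2,-2,2]])"
      and "\<Lambda>3 \<equiv> lattice_rows (vector [vector [1,1,2], vector [2,-1,1], vector [2,2,-2]])"
      and "\<Lambda>4 \<equiv> lattice_rows (vector [vector [2,-1,-1], vector [-1,2,-1], vector [2,2,2]])"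
  shows "congruent3 \<Lambda>1 L0 \<and> congruent3 \<Lambda>2 L0 \<and> congruent3 \<Lambda>3 L0 \<and> congruent3 \<Lambda>4 L0 \<and>
         \<Lambda>1 \<inter> \<Lambda>2 \<inter> \<Lambda>3 \<inter> \<Lambda>4 =
           lattice_rows (vector [vector [3,3,0], vector [3,-3,0], vector [0,3,-3]])"
proof -
  have bases: "\<Lambda>1 = lattice_rows Lambda1_basis" "\<Lambda>2 = lattice_rows Lambda2_basis"
    "\<Lambda>3 = lattice_rows Lambda3_basis" "\<Lambda>4 = lattice_rows Lambda4_basis"
    unfolding assms Lambda1_basis_def Lambda2_basis_def Lambda3_basis_def Lambda4_basis_def
    by (rule refl)+
  have "\<Lambda>1 \<inter> \<Lambda>2 \<inter> \<Lambda>3 \<inter> \<Lambda>4 = lattice_rows fcc_basis"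
    unfolding bases using fcc_subset_Lambda Lambda1_inter_Lambda4_subset_fcc by blast
  then show ?thesis
    unfolding bases fcc_basis_def
    using congruent3_Lambda1_L0 congruent3_Lambda2_L0 congruent3_Lambda3_L0 congruent3_Lambda4_L0
    by blast
qed

end
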